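(* Let $t$ be a positive integer. For integers $m\ge 0$ and $n\ge 1$, let $g_t(m,n)$ denote the number of overpartitions of $n$ in which there are exactly $m$ overlined parts, the difference between the largest and the smallest part is at most $t$, and, if the difference between the largest and the smallest part is exactly $t$, then the largest part is not overlined. Then, as formal power series in $z$ and $q$, \[ \sum_{n\ge 1}\sum_{m\ge 0} g_t(m,n)z^mq^n=\frac{1}{1-q^t}\left(\frac{(-zq;q)_t}{(q;q)_t}-1\right). \]
   Context: An overpartition of a positive integer $n$ is a partition of $n$ (a weakly decreasing sequence of positive integers summing to $n$) in which the first occurrence of each distinct part size may be overlined. For comparisons of sizes, an overlined part $\overline{a}$ has value $a$. For a complex (or formal) $a$ and integer $n\ge 0$, $(a;q)_n=\prod_{k=0}^{n-1}(1-aq^k)$. *)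

theory Defs
  imports "HOL-Computational_Algebra.Formal_Power_Series"
begin

text \<open>An overpartition is encoded as a list of pairs (part, overlined), listed in
weakly decreasing order of parts; a part may be overlined only if it is the first
occurrence of its size.\<close>

definition is_overpartition :: "nat \<Rightarrow> (nat \<times> bool) list \<Rightarrow> bool" where
  "is_overpartition n xs \<longleftrightarrow>
     (\<forall>p\<in>set xs. fst p > 0) \<and>
     sorted_wrt (\<ge>) (map fst xs) \<and>
     sum_list (map fst xs) = n \<and>
     (\<forall>i<length xs. snd (xs ! i) \<longrightarrow> (i = 0 \<or> fst (xs ! (i - 1)) \<noteq> fst (xs ! i)))"

definition num_overlined :: "(nat \<times> bool) list \<Rightarrow> nat" where
  "num_overlined xs = length (filter snd xs)"

definition largest_part :: "(nat \<times> bool) list \<Rightarrow> nat" where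
  "largest_part xs = fst (hd xs)"

definition smallest_part :: "(nat \<times> bool) list \<Rightarrow> nat" where
  "smallest_part xs = fst (last xs)"

text \<open>The largest part is overlined iff some copy of it is overlined
(necessarily the first entry of the list).\<close>
definition largest_overlined :: "(nat \<times> bool) list \<Rightarrow> bool" where
  "largest_overlined xs \<longleftrightarrow> (\<exists>p\<in>set xs. fst p = largest_part xs \<and> snd p)"

definition g :: "nat \<Rightarrow> nat \<Rightarrow> nat \<Rightarrow> nat" where
  "g t m n = card {xs. is_overpartition n xs \<and> num_overlined xs = m \<and>
      smallest_part xs + t \<ge> largest_part xs \<and>
      (largest_part xs - smallest_part xs = t \<longrightarrow> \<not> largest_overlined xs)}"

text \<open>q-Pochhammer symbol (a;q)_n with q = fps_X.\<close>
definition qpoch :: "'a::comm_ring_1 fps \<Rightarrow> nat \<Rightarrow> 'a fps" where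
  "qpoch a n = (\<Prod>k<n. 1 - a * fps_X ^ k)"

end

theory Submission
  imports Defs
begin

text \<open>Weight an overpartition by z to the number of its overlined parts, and let B_t be the
generating function of the overpartitions with all parts at most t. Classifying by whether
the largest part equals t + 1 gives B_(t+1) (1 - q^(t+1)) = B_t (1 + z q^(t+1)), whence
B_t = (-zq;q)_t / (q;q)_t. An overpartition counted by g_t either has all parts at most t
(and is then automatically admissible), or its largest part L exceeds t; in the latter case
replacing L by a new smallest part L - t with the same overline is a weight-preserving
bijection onto the overpartitions of n - t counted by g_t. Hence the generating function G
of g_t satisfies G (1 - q^t) = B_t - 1.\<close>

section \<open>Overpartitions as lists\<close>

fun overpartition :: "(nat \<times> bool) list \<Rightarrow> bool" where
  "overpartition [] = True"
| "overpartition [x] = (0 < fst x)"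
| "overpartition (x # y # r) =
     (fst y \<le> fst x \<and> (snd y \<longrightarrow> fst y \<noteq> fst x) \<and> overpartition (y # r))"

lemma overpartition_iff:
  "overpartition xs \<longleftrightarrow> (\<forall>p\<in>set xs. 0 < fst p) \<and> sorted_wrt (\<ge>) (map fst xs) \<and>
     successively (\<lambda>x y. snd y \<longrightarrow> fst x \<noteq> fst y) xs"
  by (induction xs rule: overpartition.induct) (auto simp: sorted_wrt2)

lemma is_overpartition_iff:
  "is_overpartition n xs \<longleftrightarrow> overpartition xs \<and> sum_list (map fst xs) = n"
proof -
  have "(\<forall>i<length xs. snd (xs ! i) \<longrightarrow> i = 0 \<or> fst (xs ! (i - 1)) \<noteq> fst (xs ! i)) \<longleftrightarrow>
        successively (\<lambda>x y. snd y \<longrightarrow> fst x \<noteq> fst y) xs"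
    by (cases xs) (simp_all add: successively_conv_nth All_less_Suc2)
  then show ?thesis
    unfolding is_overpartition_def overpartition_iff by blast
qed

lemma overpartition_Cons:
  "overpartition (x # r) \<longleftrightarrow> 0 < fst x \<and> overpartition r \<and>
     (r \<noteq> [] \<longrightarrow> fst (hd r) \<le> fst x \<and> (snd (hd r) \<longrightarrow> fst (hd r) \<noteq> fst x))"
  by (cases r) (auto simp: overpartition_iff)

lemma overpartition_snoc:
  "overpartition (xs @ [y]) \<longleftrightarrow> overpartition xs \<and> 0 < fst y \<and>
     (xs \<noteq> [] \<longrightarrow> fst y \<le> fst (last xs) \<and> (snd y \<longrightarrow> fst y \<noteq> fst (last xs)))"
  by (induction xs rule: overpartition.induct) auto

lemma overpartition_part_bounds:
  assumes "overpartition xs" and "p \<in> set xs"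
  shows "fst (last xs) \<le> fst p" and "fst p \<le> fst (hd xs)"
proof -
  have sorted: "sorted_wrt (\<ge>) (map fst xs)"
    using assms(1) by (simp add: overpartition_iff)
  with assms(2) show "fst (last xs) \<le> fst p"
    by (cases xs rule: rev_cases) (auto simp: sorted_wrt_append)
  from sorted assms(2) show "fst p \<le> fst (hd xs)"
    by (cases xs) auto
qed

lemma overpartition_overlined_Cons:
  "overpartition (x # r) \<Longrightarrow> p \<in> set r \<Longrightarrow> fst p = fst x \<Longrightarrow> \<not> snd p"
proof (induction r arbitrary: x)
  case (Cons y r)
  show ?case
  proof (cases "p = y")
    case False
    with Cons.prems have "p \<in> set r" and "overpartition (y # r)" and "fst y \<le> fst x"
      by auto
    then have "fst p = fst y"
      using overpartition_part_bounds(2)[of "y # r" p] Cons.prems(3) by simp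
    then show ?thesis
      using Cons.IH \<open>p \<in> set r\<close> \<open>overpartition (y # r)\<close> by blast
  qed (use Cons.prems in auto)
qed simp

lemma overpartition_Cons_parts_less:
  assumes "overpartition (x # r)" and "r = [] \<or> fst (hd r) \<noteq> fst x" and "p \<in> set r"
  shows "fst p < fst x"
proof -
  have "r \<noteq> []"
    using assms(3) by auto
  then have "fst (hd r) < fst x"
    using assms(1,2) by (auto simp: overpartition_Cons)
  moreover have "fst p \<le> fst (hd r)"
    using assms(1,3) overpartition_part_bounds(2)[of r p] by (simp add: overpartition_Cons)
  ultimately show ?thesis
    by simp
qed

lemma overpartition_length_le:
  "overpartition xs \<Longrightarrow> length xs \<le> sum_list (map fst xs)"
  by (induction xs) (auto simp: overpartition_Cons)

lemma part_le_sum: "p \<in> set xs \<Longrightarrow> fst p \<le> sum_list (map fst xs)"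
  for xs :: "(nat \<times> 'a) list"
  by (intro member_le_sum_list) auto

lemma finite_overpartitions: "finite {xs. overpartition xs \<and> sum_list (map fst xs) = n}"
proof (rule finite_subset)
  show "{xs. overpartition xs \<and> sum_list (map fst xs) = n} \<subseteq>
        {xs. set xs \<subseteq> {0..n} \<times> UNIV \<and> length xs \<le> n}"
    using overpartition_length_le part_le_sum by fastforce
  show "finite {xs. set xs \<subseteq> {0..n} \<times> (UNIV :: bool set) \<and> length xs \<le> n}"
    by (rule finite_lists_length_le) auto
qed

lemma sum_overlined_image:
  fixes z :: "'a::comm_semiring_1"
  assumes "inj_on f A" and "\<And>xs. xs \<in> A \<Longrightarrow> num_overlined (f xs) = num_overlined xs + k"
  shows "(\<Sum>xs\<in>f ` A. z ^ num_overlined xs) = z ^ k * (\<Sum>xs\<in>A. z ^ num_overlined xs)"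
  using assms by (simp add: sum.reindex sum_distrib_left power_add mult.commute)

section \<open>Overpartitions with bounded parts\<close>

definition bounded_ovps :: "nat \<Rightarrow> nat \<Rightarrow> (nat \<times> bool) list set" where
  "bounded_ovps t n =
     {xs. overpartition xs \<and> sum_list (map fst xs) = n \<and> (\<forall>p\<in>set xs. fst p \<le> t)}"

lemma finite_bounded_ovps: "finite (bounded_ovps t n)"
  by (rule finite_subset[OF _ finite_overpartitions[of n]]) (auto simp: bounded_ovps_def)

lemma bounded_ovps_0: "bounded_ovps t 0 = {[]}"
proof -
  have "xs = []" if "overpartition xs" and "sum_list (map fst xs) = 0" for xs
    using overpartition_length_le[OF that(1)] that(2) by simp
  then show ?thesis
    by (auto simp: bounded_ovps_def)
qed

definition ovps_largest :: "nat \<Rightarrow> nat \<Rightarrow> (nat \<times> bool) list set" where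
  "ovps_largest u n =
     {xs. overpartition xs \<and> sum_list (map fst xs) = n \<and> xs \<noteq> [] \<and> fst (hd xs) = u}"

lemma finite_ovps_largest: "finite (ovps_largest u n)"
  by (rule finite_subset[OF _ finite_overpartitions[of n]]) (auto simp: ovps_largest_def)

lemma ovps_largest_empty: "n < u \<Longrightarrow> ovps_largest u n = {}"
  using part_le_sum[OF hd_in_set] by (fastforce simp: ovps_largest_def)

lemma bounded_ovps_Suc:
  "bounded_ovps (Suc t) n = bounded_ovps t n \<union> ovps_largest (Suc t) n"
proof (intro equalityI subsetI)
  fix xs assume xs: "xs \<in> bounded_ovps (Suc t) n"
  show "xs \<in> bounded_ovps t n \<union> ovps_largest (Suc t) n"
  proof (cases "xs \<noteq> [] \<and> fst (hd xs) = Suc t")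
    case False
    have "fst p \<le> t" if "p \<in> set xs" for p
    proof -
      have "xs \<noteq> []"
        using that by auto
      then have "fst (hd xs) \<le> t"
        using xs False by (auto simp: bounded_ovps_def le_Suc_eq)
      then show ?thesis
        using xs that overpartition_part_bounds(2)[of xs p] by (simp add: bounded_ovps_def)
    qed
    with xs show ?thesis
      by (simp add: bounded_ovps_def)
  qed (use xs in \<open>simp add: bounded_ovps_def ovps_largest_def\<close>)
next
  fix xs assume "xs \<in> bounded_ovps t n \<union> ovps_largest (Suc t) n"
  then show "xs \<in> bounded_ovps (Suc t) n"
    using overpartition_part_bounds(2)[of xs] by (fastforce simp: bounded_ovps_def ovps_largest_def)
qed

text \<open>When u already occurs, the new copy of u goes second, so that an overline on u stays on
its first copy.\<close>

definition add_part :: "nat \<Rightarrow> (nat \<times> bool) list \<Rightarrow> (nat \<times> bool) list" where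
  "add_part u ys =
     (if ys \<noteq> [] \<and> fst (hd ys) = u then hd ys # (u, False) # tl ys else (u, False) # ys)"

lemma inj_add_part: "inj (add_part u)"
proof (rule injI)
  fix ys ys' assume "add_part u ys = add_part u ys'"
  then show "ys = ys'"
    by (cases ys; cases ys') (auto simp: add_part_def split: if_splits)
qed

lemma num_overlined_add_part: "num_overlined (add_part u ys) = num_overlined ys"
  by (cases ys) (simp_all add: add_part_def num_overlined_def)

lemma add_part_mem:
  assumes "0 < u" and "ys \<in> bounded_ovps u m"
  shows "add_part u ys \<in> ovps_largest u (m + u)"
proof (cases ys)
  case (Cons y r)
  have "overpartition (y # r)" and "\<forall>p\<in>set (y # r). fst p \<le> u"
    using assms(2) by (simp_all add: Cons bounded_ovps_def)
  then have "r \<noteq> [] \<Longrightarrow> fst (hd r) \<le> u"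
    by simp
  with assms show ?thesis
    by (auto simp: Cons add_part_def ovps_largest_def bounded_ovps_def overpartition_Cons)
qed (use assms in \<open>simp add: add_part_def ovps_largest_def bounded_ovps_def\<close>)

lemma Cons_overlined_mem:
  assumes "ys \<in> bounded_ovps t m"
  shows "(Suc t, True) # ys \<in> ovps_largest (Suc t) (m + Suc t)"
  using assms by (cases ys) (auto simp: ovps_largest_def bounded_ovps_def overpartition_Cons)

lemma ovps_largest_Suc_subset:
  "ovps_largest (Suc t) (m + Suc t) \<subseteq>
     add_part (Suc t) ` bounded_ovps (Suc t) m \<union> Cons (Suc t, True) ` bounded_ovps t m"
proof
  let ?u = "Suc t"
  fix xs assume xs: "xs \<in> ovps_largest ?u (m + ?u)"
  then obtain x r where xs_eq: "xs = x # r" and x: "fst x = ?u"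
    by (auto simp: ovps_largest_def neq_Nil_conv)
  have ov: "overpartition (x # r)" and sum: "sum_list (map fst r) = m"
    using xs x by (auto simp: xs_eq ovps_largest_def)
  have bounded: "\<forall>p\<in>set r. fst p \<le> ?u"
    using overpartition_part_bounds(2)[OF ov] x by auto
  show "xs \<in> add_part ?u ` bounded_ovps ?u m \<union> Cons (?u, True) ` bounded_ovps t m"
  proof (cases "r \<noteq> [] \<and> fst (hd r) = ?u")
    case True
    then obtain r' where r_eq: "r = (?u, False) # r'"
      using ov x by (cases r) (auto simp: overpartition_Cons prod_eq_iff)
    have "x # r' \<in> bounded_ovps ?u m"
      using ov sum bounded x by (auto simp: r_eq bounded_ovps_def overpartition_Cons)
    moreover have "add_part ?u (x # r') = xs"
      by (simp add: add_part_def xs_eq r_eq x)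
    ultimately show ?thesis
      by blast
  next
    case False
    then have small: "\<forall>p\<in>set r. fst p \<le> t"
      using overpartition_Cons_parts_less[OF ov] x by (simp add: less_Suc_eq_le)
    show ?thesis
    proof (cases "snd x")
      case True
      then have "xs = (?u, True) # r" and "r \<in> bounded_ovps t m"
        using ov sum x small by (auto simp: xs_eq prod_eq_iff bounded_ovps_def overpartition_Cons)
      then show ?thesis
        by blast
    next
      case False
      then have "add_part ?u r = xs" and "r \<in> bounded_ovps ?u m"
        using ov sum bounded x \<open>\<not> (r \<noteq> [] \<and> fst (hd r) = ?u)\<close>
        by (auto simp: xs_eq prod_eq_iff add_part_def bounded_ovps_def overpartition_Cons)
      then show ?thesis
        by blast
    qed
  qed
qed

lemma ovps_largest_Suc_eq:
  "ovps_largest (Suc t) (m + Suc t) =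
     add_part (Suc t) ` bounded_ovps (Suc t) m \<union> Cons (Suc t, True) ` bounded_ovps t m"
  using ovps_largest_Suc_subset add_part_mem[of "Suc t"] Cons_overlined_mem[of _ t] by blast

lemma sum_ovps_largest_Suc:
  fixes z :: "'a::comm_semiring_1"
  shows "(\<Sum>xs\<in>ovps_largest (Suc t) n. z ^ num_overlined xs) =
    (if Suc t \<le> n then (\<Sum>xs\<in>bounded_ovps (Suc t) (n - Suc t). z ^ num_overlined xs) +
       z * (\<Sum>xs\<in>bounded_ovps t (n - Suc t). z ^ num_overlined xs) else 0)"
proof (cases "Suc t \<le> n")
  case True
  let ?w = "\<lambda>xs. z ^ num_overlined xs"
  define m where "m = n - Suc t"
  let ?A = "add_part (Suc t) ` bounded_ovps (Suc t) m" and ?C = "Cons (Suc t, True) ` bounded_ovps t m"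
  have "?A \<inter> ?C = {}"
  proof (intro equals0I)
    fix xs assume "xs \<in> ?A \<inter> ?C"
    then obtain ys zs where "xs = add_part (Suc t) ys" and "xs = (Suc t, True) # zs"
      and "zs \<in> bounded_ovps t m"
      by blast
    then have "add_part (Suc t) ys = (Suc t, True) # zs" and "\<forall>p\<in>set zs. fst p \<le> t"
      by (simp_all add: bounded_ovps_def)
    then show False
      by (auto simp: add_part_def split: if_splits)
  qed
  then have "sum ?w (ovps_largest (Suc t) n) = sum ?w ?A + sum ?w ?C"
    using ovps_largest_Suc_eq[of t m] True
    by (simp add: m_def sum.union_disjoint finite_bounded_ovps)
  also have "sum ?w ?A = sum ?w (bounded_ovps (Suc t) m)"
    by (subst sum_overlined_image[where k = 0])
      (auto intro: inj_on_subset[OF inj_add_part] simp: num_overlined_add_part)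
  also have "sum ?w ?C = z * sum ?w (bounded_ovps t m)"
    by (subst sum_overlined_image[where k = 1]) (auto simp: num_overlined_def)
  finally show ?thesis
    using True by (simp add: m_def)
qed (simp add: ovps_largest_empty)

lemma sum_bounded_ovps_Suc:
  fixes z :: "'a::comm_semiring_1"
  shows "(\<Sum>xs\<in>bounded_ovps (Suc t) n. z ^ num_overlined xs) =
    (\<Sum>xs\<in>bounded_ovps t n. z ^ num_overlined xs) +
    (if Suc t \<le> n then (\<Sum>xs\<in>bounded_ovps (Suc t) (n - Suc t). z ^ num_overlined xs) +
       z * (\<Sum>xs\<in>bounded_ovps t (n - Suc t). z ^ num_overlined xs) else 0)"
proof -
  have "bounded_ovps t n \<inter> ovps_largest (Suc t) n = {}"
  proof (intro equals0I)
    fix xs assume "xs \<in> bounded_ovps t n \<inter> ovps_largest (Suc t) n"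
    then have "xs \<noteq> []" and "fst (hd xs) = Suc t" and "\<forall>p\<in>set xs. fst p \<le> t"
      by (simp_all add: bounded_ovps_def ovps_largest_def)
    then show False
      using hd_in_set by fastforce
  qed
  then show ?thesis
    by (simp add: bounded_ovps_Suc sum.union_disjoint finite_bounded_ovps finite_ovps_largest
        sum_ovps_largest_Suc)
qed

definition bounded_gf :: "'a::comm_ring_1 \<Rightarrow> nat \<Rightarrow> 'a fps" where
  "bounded_gf z t = Abs_fps (\<lambda>n. \<Sum>xs\<in>bounded_ovps t n. z ^ num_overlined xs)"

lemma bounded_gf_0: "bounded_gf z 0 = 1"
proof (rule fps_ext)
  fix n
  have "bounded_ovps 0 n = {}" if "0 < n"
  proof (intro equals0I)
    fix xs assume xs: "xs \<in> bounded_ovps 0 n"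
    then have "\<forall>p\<in>set xs. fst p = 0"
      by (simp add: bounded_ovps_def)
    then have "sum_list (map fst xs) = 0"
      by simp
    with xs that show False
      by (simp add: bounded_ovps_def)
  qed
  then have "bounded_ovps 0 n = (if n = 0 then {[]} else {})"
    by (simp add: bounded_ovps_0)
  then show "fps_nth (bounded_gf z 0) n = fps_nth 1 n"
    by (simp add: bounded_gf_def num_overlined_def)
qed

lemma bounded_gf_Suc:
  "bounded_gf z (Suc t) * (1 - fps_X ^ Suc t) = bounded_gf z t * (1 + fps_const z * fps_X ^ Suc t)"
proof -
  have "bounded_gf z (Suc t) = bounded_gf z t + fps_X ^ Suc t * bounded_gf z (Suc t) +
      fps_const z * fps_X ^ Suc t * bounded_gf z t"
    by (rule fps_ext) (simp add: bounded_gf_def sum_bounded_ovps_Suc mult.assoc fps_X_power_mult_nth)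
  then show ?thesis
    by (simp add: algebra_simps)
qed

lemma qpoch_Suc: "qpoch a (Suc n) = qpoch a n * (1 - a * fps_X ^ n)"
  by (simp add: qpoch_def)

lemma fps_nth_qpoch_0: "fps_nth a 0 = 0 \<Longrightarrow> fps_nth (qpoch a n) 0 = 1"
  by (induction n) (simp_all add: qpoch_def qpoch_Suc)

lemma bounded_gf_qpoch: "bounded_gf z t * qpoch fps_X t = qpoch (- fps_const z * fps_X) t"
proof (induction t)
  case 0
  show ?case
    by (simp add: bounded_gf_0 qpoch_def)
next
  case (Suc t)
  have "bounded_gf z (Suc t) * qpoch fps_X (Suc t) =
      bounded_gf z (Suc t) * (1 - fps_X ^ Suc t) * qpoch fps_X t"
    by (simp only: qpoch_Suc power_Suc mult_ac)
  also have "\<dots> = bounded_gf z t * qpoch fps_X t * (1 + fps_const z * fps_X ^ Suc t)"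
    by (simp only: bounded_gf_Suc mult_ac)
  also have "\<dots> = qpoch (- fps_const z * fps_X) t * (1 + fps_const z * fps_X ^ Suc t)"
    by (simp only: Suc.IH)
  also have "1 + fps_const z * fps_X ^ Suc t = 1 - (- fps_const z * fps_X) * fps_X ^ t"
    by (simp add: algebra_simps del: fps_const_neg)
  also have "qpoch (- fps_const z * fps_X) t * \<dots> = qpoch (- fps_const z * fps_X) (Suc t)"
    by (simp only: qpoch_Suc)
  finally show ?case .
qed

section \<open>Overpartitions of bounded spread\<close>

definition spread_ovps :: "nat \<Rightarrow> nat \<Rightarrow> (nat \<times> bool) list set" where
  "spread_ovps t n = {xs. is_overpartition n xs \<and> smallest_part xs + t \<ge> largest_part xs \<and>
     (largest_part xs - smallest_part xs = t \<longrightarrow> \<not> largest_overlined xs)}"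

lemma finite_spread_ovps: "finite (spread_ovps t n)"
  by (rule finite_subset[OF _ finite_overpartitions[of n]])
    (auto simp: spread_ovps_def is_overpartition_iff)

lemma spread_ovps_nonempty: "xs \<in> spread_ovps t n \<Longrightarrow> 0 < n \<Longrightarrow> xs \<noteq> []"
  by (auto simp: spread_ovps_def is_overpartition_iff)

lemma mem_spread_ovps:
  assumes "xs \<noteq> []"
  shows "xs \<in> spread_ovps t n \<longleftrightarrow> overpartition xs \<and> sum_list (map fst xs) = n \<and>
     fst (hd xs) \<le> fst (last xs) + t \<and> (fst (hd xs) - fst (last xs) = t \<longrightarrow> \<not> snd (hd xs))"
proof -
  obtain x r where xs: "xs = x # r"
    using assms by (cases xs) auto
  have "overpartition xs \<Longrightarrow> largest_overlined xs \<longleftrightarrow> snd x"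
    using overpartition_overlined_Cons[of x r] by (auto simp: largest_overlined_def largest_part_def xs)
  then show ?thesis
    by (auto simp: spread_ovps_def is_overpartition_iff largest_part_def smallest_part_def xs)
qed

lemma sum_g_conv_spread_ovps:
  fixes z :: "'a::comm_semiring_1"
  shows "(\<Sum>m\<le>n. of_nat (g t m n) * z ^ m) = (\<Sum>xs\<in>spread_ovps t n. z ^ num_overlined xs)"
proof -
  have "num_overlined xs \<le> n" if "xs \<in> spread_ovps t n" for xs
    using that overpartition_length_le[of xs]
    by (auto simp: spread_ovps_def is_overpartition_iff num_overlined_def
        intro: le_trans[OF length_filter_le])
  then have "(\<Sum>xs\<in>spread_ovps t n. z ^ num_overlined xs) =
      (\<Sum>m\<le>n. \<Sum>xs\<in>{xs \<in> spread_ovps t n. num_overlined xs = m}. z ^ num_overlined xs)"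
    by (intro sum.group[symmetric]) (auto simp: finite_spread_ovps)
  also have "\<dots> = (\<Sum>m\<le>n. of_nat (card {xs \<in> spread_ovps t n. num_overlined xs = m}) * z ^ m)"
    by (intro sum.cong) auto
  also have "\<dots> = (\<Sum>m\<le>n. of_nat (g t m n) * z ^ m)"
    by (simp add: g_def spread_ovps_def conj_commute conj_left_commute)
  finally show ?thesis ..
qed

lemma bounded_subset_spread_ovps:
  assumes "0 < n"
  shows "bounded_ovps t n \<subseteq> spread_ovps t n"
proof
  fix xs assume xs: "xs \<in> bounded_ovps t n"
  then have "xs \<noteq> []"
    using assms by (auto simp: bounded_ovps_def)
  moreover have "overpartition xs" and "sum_list (map fst xs) = n"
    using xs by (simp_all add: bounded_ovps_def)
  moreover have "0 < fst (last xs)" and "fst (last xs) \<le> fst (hd xs)" and "fst (hd xs) \<le> t"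
    using xs \<open>xs \<noteq> []\<close> \<open>overpartition xs\<close> overpartition_part_bounds(1)[of xs "hd xs"]
    by (auto simp: bounded_ovps_def overpartition_iff)
  ultimately show "xs \<in> spread_ovps t n"
    by (simp add: mem_spread_ovps) arith
qed

lemma spread_ovps_eq:
  assumes "0 < n"
  shows "spread_ovps t n = bounded_ovps t n \<union> {xs \<in> spread_ovps t n. t < fst (hd xs)}"
proof -
  have "xs \<in> bounded_ovps t n" if "xs \<in> spread_ovps t n" and "fst (hd xs) \<le> t" for xs
  proof -
    have "overpartition xs" and "sum_list (map fst xs) = n"
      using that(1) by (simp_all add: spread_ovps_def is_overpartition_iff)
    with that(2) show ?thesis
      using overpartition_part_bounds(2)[of xs] by (fastforce simp: bounded_ovps_def)
  qed
  then show ?thesis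
    using bounded_subset_spread_ovps[OF assms] by force
qed

definition raise_smallest :: "nat \<Rightarrow> (nat \<times> bool) list \<Rightarrow> (nat \<times> bool) list" where
  "raise_smallest t ys = (fst (last ys) + t, snd (last ys)) # butlast ys"

definition lower_largest :: "nat \<Rightarrow> (nat \<times> bool) list \<Rightarrow> (nat \<times> bool) list" where
  "lower_largest t xs = tl xs @ [(fst (hd xs) - t, snd (hd xs))]"

lemma raise_smallest_mem:
  assumes "0 < t" and "bs @ [l] \<in> spread_ovps t m"
  shows "raise_smallest t (bs @ [l]) \<in> spread_ovps t (m + t)"
proof (cases "bs = []")
  case True
  with assms show ?thesis
    by (auto simp: raise_smallest_def mem_spread_ovps)
next
  case False
  with assms show ?thesis
    by (auto simp: raise_smallest_def mem_spread_ovps overpartition_Cons overpartition_snoc)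
qed

lemma lower_largest_mem:
  assumes "x # r \<in> spread_ovps t n" and "t < fst x"
  shows "lower_largest t (x # r) \<in> spread_ovps t (n - t)"
proof (cases "r = []")
  case True
  with assms show ?thesis
    by (auto simp: lower_largest_def mem_spread_ovps)
next
  case False
  have "fst (last r) \<le> fst (hd r)"
    using assms(1) False overpartition_part_bounds(1)[of r "hd r"]
    by (simp add: mem_spread_ovps overpartition_Cons)
  with assms False show ?thesis
    by (auto simp: lower_largest_def mem_spread_ovps overpartition_Cons overpartition_snoc hd_append)
qed

lemma num_overlined_raise_smallest:
  "ys \<noteq> [] \<Longrightarrow> num_overlined (raise_smallest t ys) = num_overlined ys"
  by (cases ys rule: rev_cases) (simp_all add: raise_smallest_def num_overlined_def)

lemma bij_betw_raise_smallest:
  assumes "0 < t" and "0 < m"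
  shows "bij_betw (raise_smallest t) (spread_ovps t m) {xs \<in> spread_ovps t (m + t). t < fst (hd xs)}"
proof (rule bij_betw_byWitness[where f' = "lower_largest t"])
  show "\<forall>ys\<in>spread_ovps t m. lower_largest t (raise_smallest t ys) = ys"
    using spread_ovps_nonempty assms(2) by (simp add: lower_largest_def raise_smallest_def)
  show "\<forall>xs\<in>{xs \<in> spread_ovps t (m + t). t < fst (hd xs)}. raise_smallest t (lower_largest t xs) = xs"
  proof
    fix xs assume "xs \<in> {xs \<in> spread_ovps t (m + t). t < fst (hd xs)}"
    then show "raise_smallest t (lower_largest t xs) = xs"
      using spread_ovps_nonempty[of xs t "m + t"] assms(2)
      by (cases xs) (simp_all add: lower_largest_def raise_smallest_def)
  qed
  show "raise_smallest t ` spread_ovps t m \<subseteq> {xs \<in> spread_ovps t (m + t). t < fst (hd xs)}"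
  proof (rule image_subsetI)
    fix ys assume ys: "ys \<in> spread_ovps t m"
    then obtain bs l where ys_eq: "ys = bs @ [l]"
      using spread_ovps_nonempty assms(2) by (cases ys rule: rev_cases) auto
    have "0 < fst l"
      using ys by (simp add: ys_eq mem_spread_ovps overpartition_snoc)
    then show "raise_smallest t ys \<in> {xs \<in> spread_ovps t (m + t). t < fst (hd xs)}"
      using raise_smallest_mem[OF assms(1), of bs l m] ys by (simp add: ys_eq raise_smallest_def)
  qed
  show "lower_largest t ` {xs \<in> spread_ovps t (m + t). t < fst (hd xs)} \<subseteq> spread_ovps t m"
  proof (rule image_subsetI)
    fix xs assume "xs \<in> {xs \<in> spread_ovps t (m + t). t < fst (hd xs)}"
    then show "lower_largest t xs \<in> spread_ovps t m"
      using spread_ovps_nonempty[of xs t "m + t"] assms(2) lower_largest_mem[of "hd xs" "tl xs" t "m + t"]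
      by simp
  qed
qed

lemma sum_spread_ovps_large:
  fixes z :: "'a::comm_semiring_1"
  assumes "0 < t" and "0 < n"
  shows "(\<Sum>xs\<in>{xs \<in> spread_ovps t n. t < fst (hd xs)}. z ^ num_overlined xs) =
    (if t < n then (\<Sum>xs\<in>spread_ovps t (n - t). z ^ num_overlined xs) else 0)"
proof (cases "t < n")
  case True
  have bij:
    "bij_betw (raise_smallest t) (spread_ovps t (n - t)) {xs \<in> spread_ovps t n. t < fst (hd xs)}"
    using bij_betw_raise_smallest[OF assms(1), of "n - t"] True by simp
  have "num_overlined (raise_smallest t ys) = num_overlined ys + 0"
    if "ys \<in> spread_ovps t (n - t)" for ys
    using that True spread_ovps_nonempty num_overlined_raise_smallest by simp
  from sum_overlined_image[OF bij_betw_imp_inj_on[OF bij] this, of z]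
  show ?thesis
    using bij_betw_imp_surj_on[OF bij] True by simp
next
  case False
  have "{xs \<in> spread_ovps t n. t < fst (hd xs)} = {}"
  proof (intro equals0I)
    fix xs assume xs: "xs \<in> {xs \<in> spread_ovps t n. t < fst (hd xs)}"
    then have "sum_list (map fst xs) = n"
      by (simp add: spread_ovps_def is_overpartition_iff)
    then show False
      using xs False assms(2) spread_ovps_nonempty part_le_sum[OF hd_in_set, of xs] by force
  qed
  then show ?thesis
    by (simp only: sum.empty) (simp add: False)
qed

lemma sum_spread_ovps:
  fixes z :: "'a::comm_semiring_1"
  assumes "0 < t" and "0 < n"
  shows "(\<Sum>xs\<in>spread_ovps t n. z ^ num_overlined xs) =
    (\<Sum>xs\<in>bounded_ovps t n. z ^ num_overlined xs) +
    (if t < n then (\<Sum>xs\<in>spread_ovps t (n - t). z ^ num_overlined xs) else 0)"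
proof -
  let ?w = "\<lambda>xs. z ^ num_overlined xs"
  let ?D = "{xs \<in> spread_ovps t n. t < fst (hd xs)}"
  have "bounded_ovps t n \<inter> ?D = {}"
  proof (intro equals0I)
    fix xs assume xs: "xs \<in> bounded_ovps t n \<inter> ?D"
    then have "xs \<noteq> []"
      using assms(2) by (auto simp: bounded_ovps_def)
    moreover from xs have "\<forall>p\<in>set xs. fst p \<le> t" and "t < fst (hd xs)"
      by (auto simp: bounded_ovps_def)
    ultimately show False
      using hd_in_set leD by blast
  qed
  then have "sum ?w (bounded_ovps t n \<union> ?D) = sum ?w (bounded_ovps t n) + sum ?w ?D"
    by (simp add: sum.union_disjoint finite_bounded_ovps finite_spread_ovps)
  then show ?thesis
    by (simp flip: spread_ovps_eq[OF assms(2)] add: sum_spread_ovps_large[OF assms])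
qed

text \<open>The constant term is set to 0 explicitly: whether [] lies in spread_ovps t 0 depends on
the unspecified values of hd [] and last [].\<close>

definition spread_gf :: "'a::comm_ring_1 \<Rightarrow> nat \<Rightarrow> 'a fps" where
  "spread_gf z t = Abs_fps (\<lambda>n. if n \<ge> 1 then \<Sum>xs\<in>spread_ovps t n. z ^ num_overlined xs else 0)"

lemma spread_gf_mult:
  assumes "0 < t"
  shows "spread_gf z t * (1 - fps_X ^ t) = bounded_gf z t - 1"
proof (rule fps_ext)
  fix n
  show "fps_nth (spread_gf z t * (1 - fps_X ^ t)) n = fps_nth (bounded_gf z t - 1) n"
  proof (cases "n = 0")
    case True
    then show ?thesis
      using assms by (simp add: spread_gf_def bounded_gf_def bounded_ovps_0 num_overlined_def)
  next
    case False
    then show ?thesis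
      using sum_spread_ovps[OF assms, of n z]
      by (auto simp: spread_gf_def bounded_gf_def algebra_simps fps_X_power_mult_nth)
  qed
qed

theorem theorem1p1:
  fixes t :: nat and z :: complex
  assumes "t > 0"
  shows "Abs_fps (\<lambda>n. if n \<ge> 1 then (\<Sum>m\<le>n. of_nat (g t m n) * z ^ m) else 0)
       = (1 / (1 - fps_X ^ t)) *
         (qpoch (- fps_const z * fps_X) t / qpoch fps_X t - 1)"
proof -
  have "qpoch fps_X t \<noteq> (0 :: complex fps)"
    using fps_nth_qpoch_0[of fps_X t] by (metis fps_X_nth fps_zero_nth zero_neq_one)
  from fps_divide_times_eq[OF this, of "bounded_gf z t"]
  have quotient: "qpoch (- fps_const z * fps_X) t / qpoch fps_X t = bounded_gf z t"
    unfolding bounded_gf_qpoch .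
  have unit: "fps_nth (1 - fps_X ^ t :: complex fps) 0 \<noteq> 0"
    using assms by simp
  have "1 / (1 - fps_X ^ t) * (bounded_gf z t - 1) =
      spread_gf z t * (1 / (1 - fps_X ^ t) * (1 - fps_X ^ t))"
    by (simp only: spread_gf_mult[OF assms, symmetric] mult_ac)
  also have "\<dots> = spread_gf z t"
    by (simp add: fps_divide_unit[OF unit] inverse_mult_eq_1[OF unit])
  finally show ?thesis
    unfolding quotient spread_gf_def sum_g_conv_spread_ovps by simp
qed

end
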